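(* Let $m\ge1$, $n\in\mathbb{Z}$, and let $B=(b_0,\ldots,b_{m-1})$ and $T=(t_0,\ldots,t_{m-1})$ be sequences of integers with $\sum_i b_i\le n$ and $\sum_i t_i=n-m+1$. Then for every $l\in\{1,\ldots,m\}$ there exists $i\in\{0,\ldots,m-1\}$ such that for every $l'\in\{1,\ldots,l\}$, $$\sum_{j=i}^{i+l'-1}b_j\le l'-1+\sum_{j=i}^{i+l'-1}t_j.$$
   Context: Indices of $B$ and $T$ are taken modulo $m$ (ring arrangement); $\sum_{j=i}^{i+l'-1}b_j$ is the sum of the chain of $l'$ consecutive boxes starting at $b_i$. *)

theory Defs
  imports Main
begin

end

theory Submission
  imports Defs
begin

text \<open>Put \<open>d j = b j - t j - 1\<close>; the hypotheses give \<open>\<Sum>j<m. d j \<le> -1 < 0\<close>, and the claim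
  says that all cyclic windows of length at most \<open>m\<close> starting at \<open>i\<close> have negative \<open>d\<close>-sum.
  This is a cycle lemma: start at the last index \<open>i < m\<close> where the prefix sums
  \<open>S k = \<Sum>j<k. d j\<close> attain their maximum over one period. Windows ending before \<open>m\<close> end at
  a prefix sum strictly below \<open>S i\<close>; windows wrapping around end at \<open>S m + S k \<le> S m + S i\<close>,
  and \<open>S m < 0\<close>.\<close>

lemma ex_last_maximizer:
  fixes S :: "nat \<Rightarrow> 'a::linorder"
  assumes "m \<ge> 1"
  obtains i where "i < m" and "\<And>k. k < m \<Longrightarrow> S k \<le> S i"
    and "\<And>k. i < k \<Longrightarrow> k < m \<Longrightarrow> S k < S i"
proof -
  define mx where "mx = Max (S ` {..<m})"
  have mx_ge: "S k \<le> mx" if "k < m" for k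
    unfolding mx_def using that by simp
  have "mx \<in> S ` {..<m}"
    unfolding mx_def using assms by (intro Max_in) (auto simp: lessThan_empty_iff)
  then have maximizers_ne: "{k. k < m \<and> S k = mx} \<noteq> {}" by auto
  define i where "i = Max {k. k < m \<and> S k = mx}"
  have "i \<in> {k. k < m \<and> S k = mx}"
    unfolding i_def using maximizers_ne by (intro Max_in) auto
  then have "i < m" and Si: "S i = mx" by auto
  have last: "k \<le> i" if "k < m" "S k = mx" for k
    unfolding i_def using that by (intro Max_ge) auto
  show thesis
  proof (rule that[OF \<open>i < m\<close>])
    show "S k \<le> S i" if "k < m" for k using mx_ge[OF that] Si by simp
    show "S k < S i" if "i < k" "k < m" for k
      using mx_ge[OF \<open>k < m\<close>] last[of k] that Si by force
  qed
qed

lemma sum_lessThan_add_period: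
  fixes f :: "nat \<Rightarrow> 'a::comm_monoid_add"
  shows "(\<Sum>j<m + k. f (j mod m)) = (\<Sum>j<m. f (j mod m)) + (\<Sum>j<k. f (j mod m))"
  by (induction k) (simp_all add: add.assoc)

lemma sum_window_eq_diff:
  fixes f :: "nat \<Rightarrow> 'a::ab_group_add"
  shows "(\<Sum>j=i..<i+l. f j) = (\<Sum>j<i+l. f j) - (\<Sum>j<i. f j)"
proof -
  have "(\<Sum>j=0..<i. f j) + (\<Sum>j=i..<i+l. f j) = (\<Sum>j=0..<i+l. f j)"
    by (rule sum.atLeastLessThan_concat) auto
  then show ?thesis by (simp add: atLeast0LessThan algebra_simps)
qed

lemma cycle_lemma_negative_windows:
  fixes f :: "nat \<Rightarrow> 'a::linordered_ab_group_add"
  assumes "m \<ge> 1" and "(\<Sum>j<m. f j) < 0"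
  obtains i where "i < m" and "\<And>l. 1 \<le> l \<Longrightarrow> l \<le> m \<Longrightarrow> (\<Sum>j=i..<i+l. f (j mod m)) < 0"
proof -
  define S where "S k = (\<Sum>j<k. f (j mod m))" for k
  have Sm: "S m < 0"
    using assms(2) by (simp add: S_def)
  obtain i where "i < m" and S_le: "\<And>k. k < m \<Longrightarrow> S k \<le> S i"
    and S_less: "\<And>k. i < k \<Longrightarrow> k < m \<Longrightarrow> S k < S i"
    using ex_last_maximizer[OF assms(1)] by blast
  have "S (i + l) < S i" if "1 \<le> l" "l \<le> m" for l
  proof (cases "i + l < m")
    case True
    then show ?thesis using S_less that by simp
  next
    case False
    define k where "k = i + l - m"
    have k: "i + l = m + k" "k < m"
      using False that \<open>i < m\<close> unfolding k_def by linarith+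
    have "S (i + l) = S m + S k"
      unfolding k(1) S_def by (rule sum_lessThan_add_period)
    also have "\<dots> < S k"
      using Sm by simp
    also have "\<dots> \<le> S i"
      using S_le[OF k(2)] .
    finally show ?thesis .
  qed
  then show thesis
    using \<open>i < m\<close> by (intro that) (auto simp: sum_window_eq_diff S_def)
qed

theorem mainTheorem6:
  fixes m :: nat and n :: int and b t :: "nat \<Rightarrow> int"
  assumes "m \<ge> 1"
    and "(\<Sum>i<m. b i) \<le> n"
    and "(\<Sum>i<m. t i) = n - int m + 1"
  shows "\<forall>l\<in>{1..m}. \<exists>i\<in>{0..<m}. \<forall>l'\<in>{1..l}.
           (\<Sum>j=i..<i+l'. b (j mod m)) \<le> int l' - 1 + (\<Sum>j=i..<i+l'. t (j mod m))"
proof -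
  define d where "d j = b j - t j - 1" for j
  have "(\<Sum>j<m. d j) < 0"
    using assms(2,3) by (simp add: d_def sum_subtractf)
  then obtain i where "i < m"
    and neg: "\<And>l. 1 \<le> l \<Longrightarrow> l \<le> m \<Longrightarrow> (\<Sum>j=i..<i+l. d (j mod m)) < 0"
    using cycle_lemma_negative_windows[OF assms(1)] by blast
  have "(\<Sum>j=i..<i+l. b (j mod m)) \<le> int l - 1 + (\<Sum>j=i..<i+l. t (j mod m))"
    if "1 \<le> l" "l \<le> m" for l
    using neg[OF that] by (simp add: d_def sum_subtractf)
  with \<open>i < m\<close> show ?thesis by fastforce
qed

end
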